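(* Let $(X,d)$ be a bicomplete quasi-pseudometric space. Let $J:X\to X$ be a continuous single-valued map such that $r\,d(x,y)\le d(Jx,Jy)$ for all $x,y\in X$, for some constant $r>0$. Let $F:X\to CB(X)$ be a set-valued map such that $$H(Fx,Fy)\le \alpha\, d(Jx,Jy)\quad\text{for all }x,y\in X,$$ where $\alpha\in(0,1)$ and $r\alpha<1$. If $J$ and $F$ have the approximate mix-point property, then $F$ has a $J$-fixed point, i.e. there is $x\in X$ with $Jx\in Fx$.
   Context: A quasi-pseudometric on a nonempty set $X$ is a map $d:X\times X\to[0,\infty)$ with $d(x,x)=0$ and $d(x,z)\le d(x,y)+d(y,z)$ for all $x,y,z$; it is $T_0$ if $d(x,y)=0=d(y,x)$ implies $x=y$. Write $d^s(x,y)=\max\{d(x,y),d(y,x)\}$. The space $(X,d)$ is bicomplete if $d$ is $T_0$ and the metric $d^s$ is complete. For $x\in X$ and nonempty $A\subseteq X$: $d(x,A)=\inf_{a\in A}d(x,a)$, $d(A,x)=\inf_{a\in A}d(a,x)$. For nonempty $A,B\subseteq X$: $H(A,B)=\max\{\sup_{a\in A}d(a,B),\ \sup_{b\in B}d(A,b)\}$. $CB(X)$ denotes the family of nonempty $d^s$-bounded, $\tau(d^s)$-closed subsets of $X$; continuity of $J$ is with respect to $\tau(d^s)$. $J$ and $F$ have the approximate mix-point property if $\inf_{x\in X}\sup_{y\in Fx}d^s(Jx,y)=0$. *)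

theory Defs
  imports Main "HOL.Real"
begin

text \<open>The space X is the whole (nonempty) type 'a; d :: 'a => 'a => real.\<close>

definition quasi_pseudometric :: "('a \<Rightarrow> 'a \<Rightarrow> real) \<Rightarrow> bool" where
  "quasi_pseudometric d \<longleftrightarrow>
     (\<forall>x y. d x y \<ge> 0) \<and> (\<forall>x. d x x = 0) \<and> (\<forall>x y z. d x z \<le> d x y + d y z)"

definition T0_qpm :: "('a \<Rightarrow> 'a \<Rightarrow> real) \<Rightarrow> bool" where
  "T0_qpm d \<longleftrightarrow> (\<forall>x y. d x y = 0 \<and> d y x = 0 \<longrightarrow> x = y)"

definition sym_dist :: "('a \<Rightarrow> 'a \<Rightarrow> real) \<Rightarrow> 'a \<Rightarrow> 'a \<Rightarrow> real" where
  "sym_dist d x y = max (d x y) (d y x)"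

definition ds_cauchy :: "('a \<Rightarrow> 'a \<Rightarrow> real) \<Rightarrow> (nat \<Rightarrow> 'a) \<Rightarrow> bool" where
  "ds_cauchy d s \<longleftrightarrow> (\<forall>e>0. \<exists>N. \<forall>m\<ge>N. \<forall>n\<ge>N. sym_dist d (s m) (s n) < e)"

definition ds_converges_to :: "('a \<Rightarrow> 'a \<Rightarrow> real) \<Rightarrow> (nat \<Rightarrow> 'a) \<Rightarrow> 'a \<Rightarrow> bool" where
  "ds_converges_to d s l \<longleftrightarrow> (\<forall>e>0. \<exists>N. \<forall>n\<ge>N. sym_dist d (s n) l < e)"

definition bicomplete :: "('a \<Rightarrow> 'a \<Rightarrow> real) \<Rightarrow> bool" where
  "bicomplete d \<longleftrightarrow> quasi_pseudometric d \<and> T0_qpm d \<and>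
     (\<forall>s. ds_cauchy d s \<longrightarrow> (\<exists>l. ds_converges_to d s l))"

definition ds_continuous :: "('a \<Rightarrow> 'a \<Rightarrow> real) \<Rightarrow> ('a \<Rightarrow> 'a) \<Rightarrow> bool" where
  "ds_continuous d J \<longleftrightarrow>
     (\<forall>x. \<forall>e>0. \<exists>\<delta>>0. \<forall>y. sym_dist d x y < \<delta> \<longrightarrow> sym_dist d (J x) (J y) < e)"

definition CB :: "('a \<Rightarrow> 'a \<Rightarrow> real) \<Rightarrow> 'a set set" where
  "CB d = {A. A \<noteq> {} \<and> (\<exists>x0 R. \<forall>a\<in>A. sym_dist d x0 a \<le> R) \<and>
              (\<forall>x. (\<forall>e>0. \<exists>a\<in>A. sym_dist d x a < e) \<longrightarrow> x \<in> A)}"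

definition dist_pt_set :: "('a \<Rightarrow> 'a \<Rightarrow> real) \<Rightarrow> 'a \<Rightarrow> 'a set \<Rightarrow> real" where
  "dist_pt_set d x A = (INF a\<in>A. d x a)"

definition dist_set_pt :: "('a \<Rightarrow> 'a \<Rightarrow> real) \<Rightarrow> 'a set \<Rightarrow> 'a \<Rightarrow> real" where
  "dist_set_pt d A x = (INF a\<in>A. d a x)"

definition hausdorff_qpm :: "('a \<Rightarrow> 'a \<Rightarrow> real) \<Rightarrow> 'a set \<Rightarrow> 'a set \<Rightarrow> real" where
  "hausdorff_qpm d A B = max (SUP a\<in>A. dist_pt_set d a B) (SUP b\<in>B. dist_set_pt d A b)"

definition approx_mix_point :: "('a \<Rightarrow> 'a \<Rightarrow> real) \<Rightarrow> ('a \<Rightarrow> 'a) \<Rightarrow> ('a \<Rightarrow> 'a set) \<Rightarrow> bool" where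
  "approx_mix_point d J F \<longleftrightarrow> (INF x. SUP y\<in>F x. sym_dist d (J x) y) = 0"

end

theory Submission
  imports Defs Complex_Main
begin

text \<open>Choose points \<open>x\<^sub>n\<close> whose whole image \<open>F x\<^sub>n\<close> lies within \<open>1/(n+1)\<close> of \<open>J x\<^sub>n\<close>.
  Comparing \<open>J x\<^sub>n\<close> and \<open>J x\<^sub>m\<close> through \<open>F x\<^sub>n\<close> and \<open>F x\<^sub>m\<close>, the contraction
  condition gives \<open>(1 - \<alpha>) d(J x\<^sub>n, J x\<^sub>m) \<le> 1/(n+1) + 1/(m+1)\<close>, and the lower bound
  \<open>r d(x,y) \<le> d(Jx,Jy)\<close> transfers this to \<open>(x\<^sub>n)\<close>, which is therefore \<open>d\<^sup>s\<close>-Cauchy.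
  Its limit \<open>p\<close> satisfies \<open>J x\<^sub>n \<rightarrow> J p\<close> by continuity, and since \<open>F x\<^sub>n\<close> and \<open>F p\<close>
  are Hausdorff-close, points of \<open>F p\<close> come arbitrarily close to \<open>J p\<close>; as \<open>F p\<close> is
  closed, \<open>J p \<in> F p\<close>.\<close>

lemma qpm_nonneg: "quasi_pseudometric d \<Longrightarrow> 0 \<le> d x y"
  by (simp add: quasi_pseudometric_def)

(* Instantiations [of d x z y] list the endpoints before the intermediate point. *)
lemma qpm_triangle: "quasi_pseudometric d \<Longrightarrow> d x z \<le> d x y + d y z"
  by (simp add: quasi_pseudometric_def)

lemma sym_dist_ge: "d x y \<le> sym_dist d x y" "d y x \<le> sym_dist d x y"
  by (auto simp: sym_dist_def)

lemma sym_dist_nonneg: "quasi_pseudometric d \<Longrightarrow> 0 \<le> sym_dist d x y"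
  by (simp add: sym_dist_def qpm_nonneg max.coboundedI1)

lemma sym_dist_commute: "sym_dist d x y = sym_dist d y x"
  by (simp add: sym_dist_def max.commute)

lemma sym_dist_less_iff: "sym_dist d x y < e \<longleftrightarrow> d x y < e \<and> d y x < e"
  by (simp add: sym_dist_def)

lemma sym_dist_triangle:
  "quasi_pseudometric d \<Longrightarrow> sym_dist d x z \<le> sym_dist d x y + sym_dist d y z"
  using qpm_triangle[of d x z y] qpm_triangle[of d z x y] by (auto simp: sym_dist_def)

lemma hausdorff_qpm_approx:
  assumes Q: "quasi_pseudometric d" and A: "A \<in> CB d" and B: "B \<in> CB d" and a: "a \<in> A"
    and H: "hausdorff_qpm d A B \<le> c" and e: "0 < e"
  shows "\<exists>b\<in>B. d a b < c + e"
proof -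
  obtain x0 R where R: "\<forall>a\<in>A. sym_dist d x0 a \<le> R" using A by (auto simp: CB_def)
  obtain b0 where b0: "b0 \<in> B" using B by (auto simp: CB_def)
  have bdd_below: "bdd_below ((\<lambda>b. d a' b) ` B)" for a'
    using qpm_nonneg[OF Q] by (intro bdd_belowI2[where m=0]) auto
  have "dist_pt_set d a' B \<le> R + d x0 b0" if "a' \<in> A" for a'
  proof -
    have "dist_pt_set d a' B \<le> d a' b0"
      unfolding dist_pt_set_def by (rule cINF_lower[OF bdd_below b0])
    also have "\<dots> \<le> d a' x0 + d x0 b0" by (rule qpm_triangle[OF Q])
    also have "\<dots> \<le> R + d x0 b0" using R that sym_dist_ge(2)[of d a' x0] by force
    finally show ?thesis .
  qed
  then have "bdd_above ((\<lambda>a'. dist_pt_set d a' B) ` A)" by (rule bdd_aboveI2)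
  then have "dist_pt_set d a B \<le> (SUP a'\<in>A. dist_pt_set d a' B)" by (rule cSUP_upper[OF a])
  also have "\<dots> \<le> hausdorff_qpm d A B" by (simp add: hausdorff_qpm_def)
  finally have "dist_pt_set d a B < c + e" using H e by linarith
  with b0 show ?thesis unfolding dist_pt_set_def using cINF_less_iff[OF _ bdd_below] by blast
qed

lemma approx_mix_point_witness:
  assumes Q: "quasi_pseudometric d" and CB: "\<forall>x. F x \<in> CB d"
    and M: "approx_mix_point d J F" and e: "0 < e"
  shows "\<exists>x. \<forall>y\<in>F x. sym_dist d (J x) y < e"
proof -
  have bdd: "bdd_above ((\<lambda>y. sym_dist d (J x) y) ` F x)" for x
  proof -
    obtain x0 R where R: "\<forall>a\<in>F x. sym_dist d x0 a \<le> R" using CB[rule_format, of x] by (auto simp: CB_def)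
    show ?thesis
    proof (rule bdd_aboveI2)
      fix y assume "y \<in> F x"
      then show "sym_dist d (J x) y \<le> sym_dist d (J x) x0 + R"
        using sym_dist_triangle[OF Q, of "J x" y x0] R by force
    qed
  qed
  have "0 \<le> (SUP y\<in>F x. sym_dist d (J x) y)" for x
  proof -
    obtain y where y: "y \<in> F x" using CB[rule_format, of x] by (auto simp: CB_def)
    have "0 \<le> sym_dist d (J x) y" by (rule sym_dist_nonneg[OF Q])
    also have "\<dots> \<le> (SUP y\<in>F x. sym_dist d (J x) y)" by (rule cSUP_upper[OF y bdd])
    finally show ?thesis .
  qed
  then have "bdd_below (range (\<lambda>x. SUP y\<in>F x. sym_dist d (J x) y))"
    by (intro bdd_belowI2[where m=0])
  moreover have "(INF x. SUP y\<in>F x. sym_dist d (J x) y) < e"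
    using M e by (simp add: approx_mix_point_def)
  ultimately obtain x where x: "(SUP y\<in>F x. sym_dist d (J x) y) < e"
    using cINF_less_iff[OF UNIV_not_empty] by blast
  have "sym_dist d (J x) y < e" if "y \<in> F x" for y
    using cSUP_upper[OF that bdd] x by linarith
  then show ?thesis by blast
qed

lemma approx_mix_point_sequence:
  assumes "quasi_pseudometric d" and "\<forall>x. F x \<in> CB d" and "approx_mix_point d J F"
  shows "\<exists>x. \<forall>n. \<forall>y\<in>F (x n). sym_dist d (J (x n)) y < inverse (real (Suc n))"
  using approx_mix_point_witness[OF assms] by (intro choice) simp

lemma contraction_dist_le:
  assumes Q: "quasi_pseudometric d" and CB: "\<forall>x. F x \<in> CB d"
    and H: "\<forall>x y. hausdorff_qpm d (F x) (F y) \<le> \<alpha> * d (J x) (J y)"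
    and u: "\<forall>y\<in>F u. d (J u) y < e\<^sub>u" and v: "\<forall>y\<in>F v. d y (J v) < e\<^sub>v"
  shows "(1 - \<alpha>) * d (J u) (J v) \<le> e\<^sub>u + e\<^sub>v"
proof (rule field_le_epsilon)
  fix \<epsilon> :: real assume "0 < \<epsilon>"
  obtain y where y: "y \<in> F u" using CB[rule_format, of u] by (auto simp: CB_def)
  obtain z where z: "z \<in> F v" "d y z < \<alpha> * d (J u) (J v) + \<epsilon>"
    using hausdorff_qpm_approx[OF Q CB[rule_format] CB[rule_format] y H[rule_format] \<open>0 < \<epsilon>\<close>]
    by blast
  have "d (J u) (J v) \<le> d (J u) y + d y z + d z (J v)"
    using qpm_triangle[OF Q, of "J u" "J v" y] qpm_triangle[OF Q, of y "J v" z] by linarith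
  moreover have "d (J u) y < e\<^sub>u" "d z (J v) < e\<^sub>v" using u y v z(1) by blast+
  ultimately show "(1 - \<alpha>) * d (J u) (J v) \<le> e\<^sub>u + e\<^sub>v + \<epsilon>"
    using z(2) by (simp add: left_diff_distrib)
qed

lemma ds_cauchy_if_dist_le_null:
  assumes le: "\<And>m n. sym_dist d (s m) (s n) \<le> c m + c n" and c: "c \<longlonglongrightarrow> 0"
  shows "ds_cauchy d s"
  unfolding ds_cauchy_def
proof (intro allI impI)
  fix e :: real assume "0 < e"
  then obtain N where N: "\<forall>n\<ge>N. norm (c n - 0) < e / 2"
    using c unfolding LIMSEQ_iff by (meson half_gt_zero)
  have "sym_dist d (s m) (s n) < e" if "N \<le> m" "N \<le> n" for m n
  proof -
    have "\<bar>c m\<bar> < e / 2" "\<bar>c n\<bar> < e / 2" using N that by simp_all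
    then show ?thesis using le[of m n] by linarith
  qed
  then show "\<exists>N. \<forall>m\<ge>N. \<forall>n\<ge>N. sym_dist d (s m) (s n) < e" by blast
qed

lemma ds_continuous_converges:
  assumes "ds_continuous d J" and "ds_converges_to d s p"
  shows "ds_converges_to d (\<lambda>n. J (s n)) (J p)"
  unfolding ds_converges_to_def
proof (intro allI impI)
  fix e :: real assume "0 < e"
  then obtain \<delta> where "\<delta> > 0" and \<delta>: "\<And>y. sym_dist d p y < \<delta> \<Longrightarrow> sym_dist d (J p) (J y) < e"
    using assms(1) unfolding ds_continuous_def by blast
  then obtain N where "\<forall>n\<ge>N. sym_dist d (s n) p < \<delta>"
    using assms(2) unfolding ds_converges_to_def by blast
  then have "sym_dist d (J (s n)) (J p) < e" if "N \<le> n" for n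
    using \<delta>[of "s n"] that by (simp add: sym_dist_commute)
  then show "\<exists>N. \<forall>n\<ge>N. sym_dist d (J (s n)) (J p) < e" by blast
qed

lemma approx_mix_points_ds_cauchy:
  assumes Q: "quasi_pseudometric d" and CB: "\<forall>x. F x \<in> CB d"
    and H: "\<forall>x y. hausdorff_qpm d (F x) (F y) \<le> \<alpha> * d (J x) (J y)" and "\<alpha> < 1"
    and "r > 0" and rJ: "\<forall>x y. r * d x y \<le> d (J x) (J y)"
    and mix: "\<forall>n. \<forall>y\<in>F (x n). sym_dist d (J (x n)) y < e n" and e: "e \<longlonglongrightarrow> 0"
  shows "ds_cauchy d x"
proof (rule ds_cauchy_if_dist_le_null)
  define k where "k = (1 - \<alpha>) * r"
  have "k > 0" using \<open>\<alpha> < 1\<close> \<open>r > 0\<close> by (simp add: k_def)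
  have dist_le: "d (x m) (x n) \<le> (e m + e n) / k" for m n
  proof -
    have "(1 - \<alpha>) * d (J (x m)) (J (x n)) \<le> e m + e n"
      using mix by (intro contraction_dist_le[OF Q CB H]) (auto simp: sym_dist_less_iff)
    moreover have "k * d (x m) (x n) \<le> (1 - \<alpha>) * d (J (x m)) (J (x n))"
      using mult_left_mono[OF rJ[rule_format], of "1 - \<alpha>"] \<open>\<alpha> < 1\<close> by (simp add: k_def)
    ultimately have "k * d (x m) (x n) \<le> e m + e n" by linarith
    then show ?thesis using \<open>k > 0\<close> by (simp add: pos_le_divide_eq mult.commute)
  qed
  show "sym_dist d (x m) (x n) \<le> e m / k + e n / k" for m n
    using dist_le[of m n] dist_le[of n m] by (simp add: sym_dist_def add_divide_distrib ac_simps)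
  show "(\<lambda>n. e n / k) \<longlonglongrightarrow> 0"
    using tendsto_divide_zero[OF e] by simp
qed

lemma near_point_in_image:
  assumes Q: "quasi_pseudometric d" and CB: "\<forall>x. F x \<in> CB d"
    and H: "\<forall>x y. hausdorff_qpm d (F x) (F y) \<le> \<alpha> * d (J x) (J y)" and "0 \<le> \<alpha>" "\<alpha> \<le> 1"
    and u: "\<forall>y\<in>F u. sym_dist d (J u) y < \<eta>" and uv: "sym_dist d (J u) (J v) < \<eta>" and "0 < \<eta>"
  shows "\<exists>a\<in>F v. sym_dist d (J v) a < 4 * \<eta>"
proof -
  have uv': "d (J u) (J v) < \<eta>" "d (J v) (J u) < \<eta>"
    using uv unfolding sym_dist_less_iff by blast+
  have "\<alpha> * d (J u) (J v) \<le> d (J u) (J v)" "\<alpha> * d (J v) (J u) \<le> d (J v) (J u)"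
    using mult_left_le_one_le[OF qpm_nonneg[OF Q] \<open>0 \<le> \<alpha>\<close> \<open>\<alpha> \<le> 1\<close>] by blast+
  obtain y where y: "y \<in> F u" using CB[rule_format, of u] by (auto simp: CB_def)
  obtain a where a: "a \<in> F v" "d y a < \<alpha> * d (J u) (J v) + \<eta>"
    using hausdorff_qpm_approx[OF Q CB[rule_format] CB[rule_format] y H[rule_format] \<open>0 < \<eta>\<close>]
    by blast
  obtain b where b: "b \<in> F u" "d a b < \<alpha> * d (J v) (J u) + \<eta>"
    using hausdorff_qpm_approx[OF Q CB[rule_format] CB[rule_format] a(1) H[rule_format] \<open>0 < \<eta>\<close>]
    by blast
  have "d (J v) a \<le> d (J v) (J u) + d (J u) y + d y a"
    using qpm_triangle[OF Q, of "J v" a "J u"] qpm_triangle[OF Q, of "J u" a y] by linarith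
  moreover have "d a (J v) \<le> d a b + d b (J u) + d (J u) (J v)"
    using qpm_triangle[OF Q, of a "J v" b] qpm_triangle[OF Q, of b "J v" "J u"] by linarith
  moreover have "d (J u) y < \<eta>" "d b (J u) < \<eta>"
    using u y b(1) unfolding sym_dist_less_iff by blast+
  ultimately have "d (J v) a < 4 * \<eta>" "d a (J v) < 4 * \<eta>"
    using a(2) b(2) uv' \<open>\<alpha> * d (J u) (J v) \<le> _\<close> \<open>\<alpha> * d (J v) (J u) \<le> _\<close> by linarith+
  with a(1) show ?thesis by (auto simp: sym_dist_less_iff)
qed

lemma image_contains_limit:
  assumes Q: "quasi_pseudometric d" and CB: "\<forall>x. F x \<in> CB d"
    and H: "\<forall>x y. hausdorff_qpm d (F x) (F y) \<le> \<alpha> * d (J x) (J y)" and "0 \<le> \<alpha>" "\<alpha> \<le> 1"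
    and mix: "\<forall>n. \<forall>y\<in>F (x n). sym_dist d (J (x n)) y < e n" and e: "e \<longlonglongrightarrow> 0"
    and lim: "ds_converges_to d (\<lambda>n. J (x n)) (J p)"
  shows "J p \<in> F p"
proof -
  have "\<exists>a\<in>F p. sym_dist d (J p) a < \<epsilon>" if "0 < \<epsilon>" for \<epsilon>
  proof -
    have "0 < \<epsilon> / 4" using that by simp
    obtain N\<^sub>1 where N\<^sub>1: "\<forall>n\<ge>N\<^sub>1. norm (e n - 0) < \<epsilon> / 4"
      using e \<open>0 < \<epsilon> / 4\<close> unfolding LIMSEQ_iff by blast
    obtain N\<^sub>2 where N\<^sub>2: "\<forall>n\<ge>N\<^sub>2. sym_dist d (J (x n)) (J p) < \<epsilon> / 4"
      using lim \<open>0 < \<epsilon> / 4\<close> unfolding ds_converges_to_def by blast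
    define n where "n = max N\<^sub>1 N\<^sub>2"
    have "\<bar>e n\<bar> < \<epsilon> / 4" using N\<^sub>1 by (simp add: n_def)
    then have "e n < \<epsilon> / 4" by (simp add: abs_less_iff)
    then have "\<forall>y\<in>F (x n). sym_dist d (J (x n)) y < \<epsilon> / 4"
      using mix by (meson less_trans)
    from near_point_in_image[OF Q CB H \<open>0 \<le> \<alpha>\<close> \<open>\<alpha> \<le> 1\<close> this _ \<open>0 < \<epsilon> / 4\<close>]
    show ?thesis using N\<^sub>2 by (simp add: n_def)
  qed
  then show ?thesis using CB[rule_format, of p] by (auto simp: CB_def)
qed

theorem mainTheorem5:
  fixes d :: "'a \<Rightarrow> 'a \<Rightarrow> real" and J :: "'a \<Rightarrow> 'a" and F :: "'a \<Rightarrow> 'a set"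
    and r \<alpha> :: real
  assumes "bicomplete d"
    and "ds_continuous d J"
    and "r > 0" and "\<forall>x y. r * d x y \<le> d (J x) (J y)"
    and "\<forall>x. F x \<in> CB d"
    and "0 < \<alpha>" and "\<alpha> < 1" and "r * \<alpha> < 1"
    and "\<forall>x y. hausdorff_qpm d (F x) (F y) \<le> \<alpha> * d (J x) (J y)"
    and "approx_mix_point d J F"
  shows "\<exists>x. J x \<in> F x"
proof -
  have Q: "quasi_pseudometric d" using assms(1) by (simp add: bicomplete_def)
  obtain x where mix: "\<forall>n. \<forall>y\<in>F (x n). sym_dist d (J (x n)) y < inverse (real (Suc n))"
    using approx_mix_point_sequence[OF Q assms(5,10)] by blast
  have "ds_cauchy d x"
    using approx_mix_points_ds_cauchy[OF Q assms(5,9,7,3,4) mix LIMSEQ_inverse_real_of_nat] .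
  then obtain p where "ds_converges_to d x p"
    using assms(1) by (auto simp: bicomplete_def)
  then have "ds_converges_to d (\<lambda>n. J (x n)) (J p)"
    using assms(2) by (rule ds_continuous_converges[rotated])
  then have "J p \<in> F p"
    using image_contains_limit[OF Q assms(5,9) _ _ mix LIMSEQ_inverse_real_of_nat] assms(6,7)
    by simp
  then show ?thesis ..
qed

end
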